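(* There is an absolute constant $C>0$ such that the following holds. Let $N=2^n$ be a power of two, let ${\cal H}$ be the discrete bivariate Haar transform on $\mathbb{C}^{N\times N}$, and let ${\cal A}:\mathbb{C}^{N\times N}\to\mathbb{C}^m$ be a linear map such that ${\cal A}{\cal H}^{-1}:\mathbb{C}^{N\times N}\to\mathbb{C}^m$ has the restricted isometry property of order $Cs\log^3(N)$ and level $\delta<1/3$. Then for any $\mathbf{X}\in\mathbb{C}^{N\times N}$, if noisy measurements $\mathbf{y}={\cal A}(\mathbf{X})+\boldsymbol{\xi}$ are observed with $\|\boldsymbol{\xi}\|_2\le\varepsilon$, then $$\hat{\mathbf{X}} = \operatorname{argmin}_{\mathbf{Z}}\|\mathbf{Z}\|_{TV}\quad\text{such that}\quad\|{\cal A}(\mathbf{Z})-\mathbf{y}\|_2\le\varepsilon$$ satisfies $$\|\mathbf{X}-\hat{\mathbf{X}}\|_2\lesssim\frac{\|\nabla\mathbf{X}-(\nabla\mathbf{X})_s\|_1}{\sqrt{s}}+\varepsilon.$$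
   Context: Notation: $u\lesssim v$ means $u\le C'v$ for an absolute constant $C'>0$. $\|\cdot\|_p$ is the entrywise $\ell_p$ norm of an array; inner product $\langle\mathbf{X},\mathbf{Y}\rangle=\mathrm{tr}(\mathbf{X}\mathbf{Y}^* )$. A linear map ${\cal A}$ from arrays to $\mathbb{C}^m$ has the restricted isometry property of order $s$ and level $\delta$ if $(1-\delta)\|\mathbf{X}\|_2^2\le\|{\cal A}(\mathbf{X})\|_2^2\le(1+\delta)\|\mathbf{X}\|_2^2$ for all arrays with at most $s$ nonzero entries. Discrete gradient: $(\mathbf{X}_x)_{j,k}=X_{j+1,k}-X_{j,k}$, $(\mathbf{X}_y)_{j,k}=X_{j,k+1}-X_{j,k}$; $\nabla\mathbf{X}\in\mathbb{C}^{N\times N\times2}$ with $[\nabla\mathbf{X}]_{j,k}=((\mathbf{X}_x)_{j,k},(\mathbf{X}_y)_{j,k})$, an undefined component being set to $0$ (first component when $j=N$, second when $k=N$). $\|\mathbf{X}\|_{TV}=\|\nabla\mathbf{X}\|_1$. $(\nabla\mathbf{X})_s$ is the best $s$-sparse approximation of $\nabla\mathbf{X}$ (its $s$ largest-magnitude entries). Haar transform: $H^0=\mathbf{1}_{[0,1)}$, $H^1=\mathbf{1}_{[0,1/2)}-\mathbf{1}_{[1/2,1)}$; for $e=(e_1,e_2)\in\{(0,1),(1,0),(1,1)\}$, $H^e(u,v)=H^{e_1}(u)H^{e_2}(v)$, $H^e_{j,k}(x)=2^jH^e(2^jx-k)$, $j\ge0$, $k\in\mathbb{Z}^2\cap2^j[0,1)^2$.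 Identifying $\mathbf{X}\in\mathbb{C}^{N\times N}$ with the function equal to $NX_{j,k}$ on $[\frac{j-1}{N},\frac jN)\times[\frac{k-1}{N},\frac kN)$, the constant function and $\{H^e_{j,k}:j\le n-1\}$ give an orthonormal basis $\{\mathbf{h}\}$ of $\mathbb{C}^{N\times N}$; ${\cal H}(\mathbf{X})$ is the $N\times N$ array of coefficients $\langle\mathbf{X},\mathbf{h}\rangle$. *)

theory Defs
  imports "HOL-Analysis.Analysis"
begin

text \<open>Arrays in C^{N x N} are functions nat \<times> nat \<Rightarrow> complex, indexed 0-based by
  the grid {0..<N} \<times> {0..<N}; values outside the grid are irrelevant/zero.
  Vectors in C^m are functions nat \<Rightarrow> complex, indexed by {0..<m}.\<close>

type_synonym arr = "nat \<times> nat \<Rightarrow> complex"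

definition grid :: "nat \<Rightarrow> (nat \<times> nat) set" where
  "grid N = {0..<N} \<times> {0..<N}"

definition is_array :: "nat \<Rightarrow> arr \<Rightarrow> bool" where
  "is_array N X \<longleftrightarrow> (\<forall>p. p \<notin> grid N \<longrightarrow> X p = 0)"

definition arr_norm2 :: "nat \<Rightarrow> arr \<Rightarrow> real" where
  "arr_norm2 N X = sqrt (\<Sum>p\<in>grid N. (cmod (X p))\<^sup>2)"

definition vec_norm2 :: "nat \<Rightarrow> (nat \<Rightarrow> complex) \<Rightarrow> real" where
  "vec_norm2 m v = sqrt (\<Sum>i<m. (cmod (v i))\<^sup>2)"

definition linear_meas :: "nat \<Rightarrow> nat \<Rightarrow> (arr \<Rightarrow> (nat \<Rightarrow> complex)) \<Rightarrow> bool" where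
  "linear_meas N m A \<longleftrightarrow>
     (\<forall>X. is_array N X \<longrightarrow> (\<forall>i. i \<ge> m \<longrightarrow> A X i = 0)) \<and>
     (\<forall>X Y. is_array N X \<longrightarrow> is_array N Y \<longrightarrow> A (\<lambda>p. X p + Y p) = (\<lambda>i. A X i + A Y i)) \<and>
     (\<forall>c X. is_array N X \<longrightarrow> A (\<lambda>p. c * X p) = (\<lambda>i. c * A X i))"

definition grad :: "nat \<Rightarrow> arr \<Rightarrow> (nat \<times> nat \<times> nat \<Rightarrow> complex)" where
  "grad N X = (\<lambda>(j,k,c).
      if c = 0 then (if j + 1 < N then X (j+1,k) - X (j,k) else 0)
      else (if k + 1 < N then X (j,k+1) - X (j,k) else 0))"

definition grad_index :: "nat \<Rightarrow> (nat \<times> nat \<times> nat) set" where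
  "grad_index N = {0..<N} \<times> {0..<N} \<times> {0..<2}"

definition tv_norm :: "nat \<Rightarrow> arr \<Rightarrow> real" where
  "tv_norm N X = (\<Sum>q\<in>grad_index N. cmod (grad N X q))"

text \<open>l1 error of the best s-sparse approximation of the gradient:
  \<parallel>\<nabla>X - (\<nabla>X)_s\<parallel>_1, i.e. the l1 mass outside the s largest-magnitude entries,
  which equals the minimum over index sets S of size at most s of the l1 mass outside S.\<close>
definition grad_tail :: "nat \<Rightarrow> nat \<Rightarrow> arr \<Rightarrow> real" where
  "grad_tail N s X = Min ((\<lambda>S. \<Sum>q\<in>grad_index N - S. cmod (grad N X q)) `
                          {S. S \<subseteq> grad_index N \<and> card S \<le> s})"

definition haar0 :: "real \<Rightarrow> real" where
  "haar0 t = (if 0 \<le> t \<and> t < 1 then 1 else 0)"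

definition haar1 :: "real \<Rightarrow> real" where
  "haar1 t = (if 0 \<le> t \<and> t < 1/2 then 1 else if 1/2 \<le> t \<and> t < 1 then -1 else 0)"

definition haar1d :: "nat \<Rightarrow> real \<Rightarrow> real" where
  "haar1d e t = (if e = 0 then haar0 t else haar1 t)"

definition haar_fun :: "nat \<times> nat \<Rightarrow> nat \<Rightarrow> nat \<times> nat \<Rightarrow> real \<times> real \<Rightarrow> real" where
  "haar_fun e j k x = 2^j * haar1d (fst e) (2^j * fst x - real (fst k))
                          * haar1d (snd e) (2^j * snd x - real (snd k))"

text \<open>Index set of the Haar basis of C^{N x N}, N = 2^n: None is the constant function,
  Some (e, j, k) is H^e_{j,k} with j \<le> n-1 and k \<in> Z^2 \<inter> 2^j [0,1)^2.\<close>
definition haar_index :: "nat \<Rightarrow> ((nat \<times> nat) \<times> nat \<times> (nat \<times> nat)) option set" where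
  "haar_index n = {None} \<union> Some ` {(e, j, k). e \<in> {(0,1),(1,0),(1,1)} \<and> j < n \<and>
                                      fst k < 2^j \<and> snd k < 2^j}"

text \<open>The array identified with a (piecewise constant) function f on [0,1)^2: X is identified
  with the function equal to N X_{a,b} on the cell [a/N,(a+1)/N) \<times> [b/N,(b+1)/N) (0-based),
  so the array of f has entry f(a/N, b/N) / N (all Haar functions with j \<le> n-1 are constant
  on these cells).\<close>
definition fun_to_arr :: "nat \<Rightarrow> (real \<times> real \<Rightarrow> real) \<Rightarrow> arr" where
  "fun_to_arr N f = (\<lambda>(a,b). if (a,b) \<in> grid N
       then complex_of_real (f (real a / real N, real b / real N) / real N) else 0)"

definition haar_basis :: "nat \<Rightarrow> ((nat \<times> nat) \<times> nat \<times> (nat \<times> nat)) option \<Rightarrow> arr" where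
  "haar_basis n b = (case b of
      None \<Rightarrow> fun_to_arr (2^n) (\<lambda>x. 1)
    | Some (e, j, k) \<Rightarrow> fun_to_arr (2^n) (haar_fun e j k))"

definition arr_inner :: "nat \<Rightarrow> arr \<Rightarrow> arr \<Rightarrow> complex" where
  "arr_inner N X Y = (\<Sum>p\<in>grid N. X p * cnj (Y p))"

definition haar_transform :: "nat \<Rightarrow> arr \<Rightarrow> ((nat \<times> nat) \<times> nat \<times> (nat \<times> nat)) option \<Rightarrow> complex" where
  "haar_transform n X = (\<lambda>b. if b \<in> haar_index n then arr_inner (2^n) X (haar_basis n b) else 0)"

definition coef_norm2 :: "nat \<Rightarrow> (((nat \<times> nat) \<times> nat \<times> (nat \<times> nat)) option \<Rightarrow> complex) \<Rightarrow> real" where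
  "coef_norm2 n c = sqrt (\<Sum>b\<in>haar_index n. (cmod (c b))\<^sup>2)"

text \<open>A H^{-1} has the RIP of order t and level \<delta>: for every coefficient array c with at most t
  nonzero entries, (1-\<delta>)\<parallel>c\<parallel>^2 \<le> \<parallel>A(H^{-1} c)\<parallel>^2 \<le> (1+\<delta>)\<parallel>c\<parallel>^2. Since H is a bijection from
  arrays onto coefficient arrays, we quantify over Z = H^{-1} c.\<close>
definition rip_haar :: "nat \<Rightarrow> nat \<Rightarrow> (arr \<Rightarrow> (nat \<Rightarrow> complex)) \<Rightarrow> real \<Rightarrow> real \<Rightarrow> bool" where
  "rip_haar n m A t \<delta> \<longleftrightarrow>
     (\<forall>Z. is_array (2^n) Z \<longrightarrow>
        real (card {b\<in>haar_index n. haar_transform n Z b \<noteq> 0}) \<le> t \<longrightarrow>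
          (1 - \<delta>) * (coef_norm2 n (haar_transform n Z))\<^sup>2 \<le> (vec_norm2 m (A Z))\<^sup>2 \<and>
          (vec_norm2 m (A Z))\<^sup>2 \<le> (1 + \<delta>) * (coef_norm2 n (haar_transform n Z))\<^sup>2)"

end

theory Submission
  imports Defs
begin

text \<open>
  Let D = X - Xh be the recovery error. Measurement consistency gives |A D|_2 <= 2 eps, and
  minimality of Xh gives the cone condition |D|_TV <= 2 |(grad D)_S|_1 + 2 sigma_s(grad X),
  where |(grad D)_S|_1 <= 3 sqrt s |D|_2.
  Expand D in the orthonormal Haar basis. A non-constant Haar function is a mean-zero pattern of
  signs on a dyadic block, so a discrete Poincare inequality bounds its coefficient by the
  variation of D on that block; the blocks of one scale tile the grid, hence the l1 norm of the
  non-constant Haar coefficients is at most 3 n |D|_TV. Sorting the coefficients by magnitude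
  into blocks of size t and applying the restricted isometry property of A H^-1 to every block
  (shelling) gives |D|_2 <= 5/4 |A D|_2 + 5/2 (l1 norm of the coefficients) / sqrt t.
  This crude l1 bound, losing a factor n = log N, suffices because the restricted isometry
  order C s log^3 N leaves room for t = (128 n)^2 s, which makes the feedback of |D|_2 into the
  right-hand side a contraction.
\<close>

section \<open>Discrete Haar vectors\<close>

definition haar_vec :: "nat \<Rightarrow> nat \<Rightarrow> nat \<Rightarrow> nat \<Rightarrow> real" where
  "haar_vec e d k a =
     (if a div 2^d = k then (if e = 0 then 1 else if a mod 2^d < 2^(d-1) then 1 else -1) else 0)"

lemma div_eq_iff_mult_bounds:
  fixes a q k :: nat
  assumes "q > 0"
  shows "a div q = k \<longleftrightarrow> k * q \<le> a \<and> a < (k+1) * q"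
  using assms by (metis div_nat_eqI div_times_less_eq_dividend dividend_less_div_times
      add.commute mult.commute mult_Suc_right plus_1_eq_Suc)

lemma haar1d_eq_haar_vec:
  assumes "j < n"
  shows "haar1d e (2^j * real a / 2^n - real k) = haar_vec e (n - j) k a"
proof -
  define d where "d = n - j"
  have d: "d \<ge> 1" "n = j + d" unfolding d_def using assms by simp_all
  define t where "t = (real a - real k * 2^d) / 2^d"
  have t_eq: "2^j * real a / 2^n - real k = t"
    unfolding t_def d(2) by (simp add: power_add field_simps)
  have "0 \<le> t \<and> t < 1 \<longleftrightarrow> real (k * 2^d) \<le> real a \<and> real a < real ((k+1) * 2^d)"
    unfolding t_def by (simp add: field_simps)
  then have in_block: "0 \<le> t \<and> t < 1 \<longleftrightarrow> a div 2^d = k"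
    unfolding of_nat_le_iff of_nat_less_iff by (simp add: div_eq_iff_mult_bounds)
  have left_half: "t < 1/2 \<longleftrightarrow> a mod 2^d < 2^(d-1)" if "a div 2^d = k"
  proof -
    define H where "H = real (2^(d-1))"
    have H: "H > 0" "(2::real)^d = 2 * H" unfolding H_def using d(1) by (cases d; simp)+
    have "a = k * 2^d + a mod 2^d" using that div_mult_mod_eq[of a "2^d"] by simp
    then have "t = real (a mod 2^d) / (2 * H)" unfolding t_def H(2)[symmetric]
      by (metis add_diff_cancel_left' of_nat_add of_nat_mult of_nat_numeral of_nat_power)
    then have "t < 1/2 \<longleftrightarrow> real (a mod 2^d) < H" using H(1) by (simp add: divide_less_eq)
    then show ?thesis unfolding H_def of_nat_less_iff .
  qed
  show ?thesis
    unfolding t_eq haar1d_def haar0_def haar1_def haar_vec_def d_def[symmetric]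
    using in_block left_half by auto
qed

definition haar_sign :: "nat \<Rightarrow> nat \<Rightarrow> real" where
  "haar_sign e r = (if e = 0 \<or> r = 0 then 1 else -1)"

lemma haar_sign_simps [simp]:
  "haar_sign 0 r = 1" "haar_sign e 0 = 1" "haar_sign (Suc 0) (Suc 0) = -1" "(haar_sign e r)\<^sup>2 = 1"
  unfolding haar_sign_def by auto

lemma haar_vec_refine:
  assumes "d \<ge> 1" "r < 2"
  shows "haar_vec e (Suc d) k (2*a+r) = haar_vec e d k a"
proof -
  have "(2*a+r) div 2^Suc d = a div 2^d"
    using assms div_mult2_eq[of "2*a+r" 2 "2^d"] by simp
  moreover have "(2*a+r) mod 2^Suc d = 2 * (a mod 2^d) + r"
    using assms mod_mult2_eq[of "2*a+r" 2 "2^d"] by (simp add: mult.commute)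
  moreover have "2 * (a mod 2^d) + r < 2^d \<longleftrightarrow> a mod 2^d < 2^(d-1)"
    using assms by (cases d) auto
  ultimately show ?thesis unfolding haar_vec_def by simp
qed

lemma haar_vec_finest:
  assumes "r < 2"
  shows "haar_vec e (Suc 0) k (2*a+r) = (if a = k then haar_sign e r else 0)"
  using assms unfolding haar_vec_def haar_sign_def by auto

lemma abs_haar_vec_le_1: "\<bar>haar_vec e d k a\<bar> \<le> 1"
  unfolding haar_vec_def by auto

lemma sum_haar_vec_eq_0:
  assumes "d \<ge> 1" "e \<noteq> 0"
  shows "(\<Sum>x<(2::nat)^d. haar_vec e d 0 x) = 0"
proof -
  define H where "H = (2::nat)^(d-1)"
  have "(2::nat)^d = H + H" unfolding H_def using assms by (cases d) auto
  moreover have "haar_vec e d 0 x = (if x < H then 1 else -1)" if "x < 2^d" for x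
    unfolding haar_vec_def H_def using assms that by simp
  ultimately have "(\<Sum>x<(2::nat)^d. haar_vec e d 0 x) = (\<Sum>x<H. 1) + (\<Sum>x\<in>{H..<H+H}. (-1::real))"
    by (simp add: lessThan_atLeast0 sum.atLeastLessThan_concat[of 0 H "H+H", symmetric])
  then show ?thesis by simp
qed

type_synonym haar_idx = "((nat \<times> nat) \<times> nat \<times> (nat \<times> nat)) option"

definition haar_entry :: "nat \<Rightarrow> haar_idx \<Rightarrow> nat \<times> nat \<Rightarrow> real" where
  "haar_entry n b p = (case b of
      None \<Rightarrow> 1 / 2^n
    | Some (e, j, k) \<Rightarrow>
        2^j * haar_vec (fst e) (n-j) (fst k) (fst p) * haar_vec (snd e) (n-j) (snd k) (snd p) / 2^n)"

definition haar_coef :: "nat \<Rightarrow> arr \<Rightarrow> haar_idx \<Rightarrow> complex" where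
  "haar_coef n W b = (\<Sum>p\<in>grid (2^n). W p * of_real (haar_entry n b p))"

lemma haar_index_Some_iff:
  "Some (e, j, k) \<in> haar_index n \<longleftrightarrow>
     e \<in> {(0,1),(1,0),(1,1)} \<and> j < n \<and> fst k < 2^j \<and> snd k < 2^j"
  unfolding haar_index_def by auto

lemma haar_basis_eq_haar_entry:
  assumes "b \<in> haar_index n"
  shows "haar_basis n b p = (if p \<in> grid (2^n) then of_real (haar_entry n b p) else 0)"
proof (cases b)
  case None
  then show ?thesis unfolding haar_basis_def fun_to_arr_def haar_entry_def by (cases p) simp
next
  case (Some x)
  then obtain e j k where b: "b = Some (e, j, k)" by (cases x) auto
  then have "j < n" using assms haar_index_Some_iff by auto
  then show ?thesis
    unfolding b haar_basis_def fun_to_arr_def haar_entry_def haar_fun_def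
    by (cases p) (simp add: haar1d_eq_haar_vec)
qed

lemma haar_transform_eq_haar_coef:
  "haar_transform n Z b = (if b \<in> haar_index n then haar_coef n Z b else 0)"
  unfolding haar_transform_def arr_inner_def haar_coef_def
  by (auto simp: haar_basis_eq_haar_entry intro: sum.cong)

section \<open>Multiscale recursion and Parseval's identity\<close>

lemma finite_grid [simp]: "finite (grid N)"
  unfolding grid_def by simp

lemma sum_grid: "(\<Sum>p\<in>grid N. f p) = (\<Sum>a<N. \<Sum>c<N. f (a, c))"
  unfolding grid_def by (simp add: sum.cartesian_product atLeast0LessThan)

lemma grid_2: "grid 2 = {(0,0), (0,1), (1,0), (1,1)}"
  unfolding grid_def by auto

lemma mult_add_less_mult:
  fixes k q K L :: nat
  assumes "k < K" "q < L"
  shows "k * L + q < K * L"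
proof -
  have "k * L + q < Suc k * L" using assms(2) by simp
  also have "\<dots> \<le> K * L" using assms(1) by (intro mult_le_mono1) simp
  finally show ?thesis .
qed

lemma sum_grid_blocks:
  "(\<Sum>p\<in>grid (K*L). f p) = (\<Sum>k\<in>grid K. \<Sum>q\<in>grid L. f (fst k * L + fst q, snd k * L + snd q))"
proof (cases "L = 0")
  case False
  then have "(\<Sum>p\<in>grid (K*L). f p) = (\<Sum>(k, q)\<in>grid K \<times> grid L. f (fst k * L + fst q, snd k * L + snd q))"
    by (intro sum.reindex_bij_witness[where i = "\<lambda>(k, q). (fst k * L + fst q, snd k * L + snd q)"
          and j = "\<lambda>p. ((fst p div L, snd p div L), (fst p mod L, snd p mod L))"])
      (auto simp: grid_def less_mult_imp_div_less mult_add_less_mult)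
  then show ?thesis by (simp add: sum.cartesian_product)
qed (simp add: grid_def)

lemma sum_grid_double:
  "(\<Sum>p\<in>grid (2*N). f p) = (\<Sum>q\<in>grid N. \<Sum>r\<in>grid 2. f (2 * fst q + fst r, 2 * snd q + snd r))"
  using sum_grid_blocks[of f N 2] by (simp add: mult.commute)

lemma haar_index_0: "haar_index 0 = {None}"
  unfolding haar_index_def by auto

lemma haar_index_Suc:
  "haar_index (Suc n) =
     haar_index n \<union> (\<lambda>(e, k). Some (e, n, k)) ` ({(0,1),(1,0),(1,1)} \<times> grid (2^n))"
  unfolding haar_index_def grid_def by (auto simp: less_Suc_eq image_iff)

lemma finite_haar_index [simp]: "finite (haar_index n)"
  by (induction n) (simp_all add: haar_index_0 haar_index_Suc)

lemma sum_haar_index_Suc: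
  "(\<Sum>b\<in>haar_index (Suc n). F b) =
     (\<Sum>b\<in>haar_index n. F b) + (\<Sum>k\<in>grid (2^n). \<Sum>e\<in>{(0,1),(1,0),(1,1)}. F (Some (e, n, k)))"
proof -
  let ?E = "{(0::nat,1::nat),(1,0),(1,1)}"
  have "inj_on (\<lambda>(e, k). Some (e, n, k)) (?E \<times> grid (2^n))"
    by (auto simp: inj_on_def)
  then have "(\<Sum>b\<in>(\<lambda>(e, k). Some (e, n, k)) ` (?E \<times> grid (2^n)). F b) =
      (\<Sum>(e, k)\<in>?E \<times> grid (2^n). F (Some (e, n, k)))"
    by (simp add: sum.reindex case_prod_beta')
  also have "\<dots> = (\<Sum>k\<in>grid (2^n). \<Sum>e\<in>?E. F (Some (e, n, k)))"
    by (simp only: sum.cartesian_product[symmetric] sum.swap[of _ ?E])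
  finally have "(\<Sum>b\<in>(\<lambda>(e, k). Some (e, n, k)) ` (?E \<times> grid (2^n)). F b) = \<dots>" .
  moreover have "haar_index n \<inter> (\<lambda>(e, k). Some (e, n, k)) ` (?E \<times> grid (2^n)) = {}"
    unfolding haar_index_def by auto
  ultimately show ?thesis
    unfolding haar_index_Suc by (simp add: sum.union_disjoint)
qed

lemma haar_entry_refine:
  assumes "b \<in> haar_index n" "r \<in> grid 2"
  shows "haar_entry (Suc n) b (2 * a + fst r, 2 * c + snd r) = haar_entry n b (a, c) / 2"
proof (cases b)
  case None
  then show ?thesis unfolding haar_entry_def by simp
next
  case (Some x)
  then obtain e j k where b: "b = Some (e, j, k)" by (cases x) auto
  then have "n - j \<ge> 1" "Suc n - j = Suc (n - j)"
    using assms(1) haar_index_Some_iff by auto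
  moreover have "fst r < 2" "snd r < 2" using assms(2) unfolding grid_def by auto
  ultimately show ?thesis unfolding b haar_entry_def by (simp add: haar_vec_refine)
qed

lemma haar_entry_finest:
  assumes "r \<in> grid 2"
  shows "haar_entry (Suc n) (Some (e, n, k)) (2 * a + fst r, 2 * c + snd r) =
    (if (a, c) = k then haar_sign (fst e) (fst r) * haar_sign (snd e) (snd r) / 2 else 0)"
  using assms unfolding haar_entry_def grid_def by (cases k) (auto simp: haar_vec_finest)

definition coarsen :: "arr \<Rightarrow> arr" where
  "coarsen W q = (\<Sum>r\<in>grid 2. W (2 * fst q + fst r, 2 * snd q + snd r)) / 2"

lemma haar_coef_refine:
  assumes "b \<in> haar_index n"
  shows "haar_coef (Suc n) W b = haar_coef n (coarsen W) b"
  unfolding haar_coef_def coarsen_def power_Suc sum_grid_double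
  by (intro sum.cong refl)
     (simp add: haar_entry_refine[OF assms] sum_distrib_right sum_divide_distrib)

lemma haar_coef_finest:
  assumes "k \<in> grid (2^n)"
  shows "haar_coef (Suc n) W (Some (e, n, k)) =
    (\<Sum>r\<in>grid 2. W (2 * fst k + fst r, 2 * snd k + snd r)
        * of_real (haar_sign (fst e) (fst r) * haar_sign (snd e) (snd r))) / 2"
proof -
  have "haar_coef (Suc n) W (Some (e, n, k)) =
      (\<Sum>q\<in>grid (2^n). if q = k then (\<Sum>r\<in>grid 2. W (2 * fst k + fst r, 2 * snd k + snd r)
        * of_real (haar_sign (fst e) (fst r) * haar_sign (snd e) (snd r))) / 2 else 0)"
    unfolding haar_coef_def power_Suc sum_grid_double
    by (intro sum.cong refl) (auto simp: haar_entry_finest sum_divide_distrib)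
  then show ?thesis using assms by simp
qed

text \<open>One refinement step acts on every 2 x 2 block by an orthogonal matrix.\<close>

lemma haar_butterfly:
  fixes w :: "nat \<times> nat \<Rightarrow> complex"
  shows "(cmod ((\<Sum>r\<in>grid 2. w r) / 2))\<^sup>2 +
     (\<Sum>e\<in>{(0,1),(1,0),(1,1)}. (cmod ((\<Sum>r\<in>grid 2. w r
        * of_real (haar_sign (fst e) (fst r) * haar_sign (snd e) (snd r))) / 2))\<^sup>2)
     = (\<Sum>r\<in>grid 2. (cmod (w r))\<^sup>2)"
  unfolding grid_2 cmod_power2 by (simp add: power2_eq_square field_simps)

lemma haar_parseval:
  "(\<Sum>p\<in>grid (2^n). (cmod (W p))\<^sup>2) = (\<Sum>b\<in>haar_index n. (cmod (haar_coef n W b))\<^sup>2)"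
proof (induction n arbitrary: W)
  case 0
  have "grid (2^0) = {(0, 0)}" unfolding grid_def by auto
  then show ?case by (simp add: haar_index_0 haar_coef_def haar_entry_def)
next
  case (Suc n)
  have "(\<Sum>b\<in>haar_index n. (cmod (haar_coef (Suc n) W b))\<^sup>2) =
      (\<Sum>k\<in>grid (2^n). (cmod (coarsen W k))\<^sup>2)"
    unfolding Suc.IH by (intro sum.cong refl) (simp add: haar_coef_refine)
  then have "(\<Sum>b\<in>haar_index (Suc n). (cmod (haar_coef (Suc n) W b))\<^sup>2) =
      (\<Sum>k\<in>grid (2^n). (cmod (coarsen W k))\<^sup>2 +
         (\<Sum>e\<in>{(0,1),(1,0),(1,1)}. (cmod (haar_coef (Suc n) W (Some (e, n, k))))\<^sup>2))"
    unfolding sum_haar_index_Suc by (simp add: sum.distrib)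
  also have "\<dots> = (\<Sum>k\<in>grid (2^n). \<Sum>r\<in>grid 2. (cmod (W (2 * fst k + fst r, 2 * snd k + snd r)))\<^sup>2)"
    by (intro sum.cong refl) (simp only: haar_coef_finest coarsen_def haar_butterfly)
  also have "\<dots> = (\<Sum>p\<in>grid (2^Suc n). (cmod (W p))\<^sup>2)"
    by (simp add: sum_grid_double)
  finally show ?case ..
qed

lemma sum_haar_entry_sq:
  "b \<in> haar_index n \<Longrightarrow> (\<Sum>p\<in>grid (2^n). (haar_entry n b p)\<^sup>2) = 1"
proof (induction n arbitrary: b)
  case 0
  have "grid (2^0) = {(0, 0)}" unfolding grid_def by auto
  then show ?case using 0 by (simp add: haar_index_0 haar_entry_def)
next
  case (Suc n)
  show ?case
  proof (cases "b \<in> haar_index n")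
    case True
    then have "(\<Sum>p\<in>grid (2^Suc n). (haar_entry (Suc n) b p)\<^sup>2) =
        (\<Sum>q\<in>grid (2^n). \<Sum>r\<in>grid 2. (haar_entry n b q / 2)\<^sup>2)"
      unfolding power_Suc sum_grid_double by (intro sum.cong refl) (simp add: haar_entry_refine)
    also have "\<dots> = (\<Sum>q\<in>grid (2^n). (haar_entry n b q)\<^sup>2)"
      by (simp add: grid_2 power_divide)
    finally show ?thesis using Suc.IH[OF True] by simp
  next
    case False
    then obtain e k where b: "b = Some (e, n, k)" and k: "k \<in> grid (2^n)"
      using Suc.prems unfolding haar_index_Suc by auto
    have "(\<Sum>p\<in>grid (2^Suc n). (haar_entry (Suc n) b p)\<^sup>2) =
        (\<Sum>q\<in>grid (2^n). \<Sum>r\<in>grid 2. if q = k then 1/4 else 0)"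
      unfolding b power_Suc sum_grid_double
      by (intro sum.cong refl) (simp add: haar_entry_finest power_mult_distrib power_divide)
    also have "\<dots> = (\<Sum>q\<in>grid (2^n). if q = k then 1 else 0)"
      by (intro sum.cong refl) (simp add: grid_2)
    also have "\<dots> = 1" using k by simp
    finally show ?thesis .
  qed
qed

definition haar_vector :: "nat \<Rightarrow> haar_idx \<Rightarrow> arr" where
  "haar_vector n b = (\<lambda>p. of_real (haar_entry n b p))"

lemma haar_coef_haar_vector:
  assumes a: "a \<in> haar_index n" and b: "b \<in> haar_index n"
  shows "haar_coef n (haar_vector n a) b = (if a = b then 1 else 0)"
proof -
  have "haar_coef n (haar_vector n a) a = of_real (\<Sum>p\<in>grid (2^n). (haar_entry n a p)\<^sup>2)"
    unfolding haar_coef_def haar_vector_def by (simp add: power2_eq_square)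
  then have self: "haar_coef n (haar_vector n a) a = 1"
    using sum_haar_entry_sq[OF a] by simp
  \<comment> \<open>By Parseval the coefficients of a unit vector have norm 1, and one of them is already 1.\<close>
  have "(\<Sum>c\<in>haar_index n. (cmod (haar_coef n (haar_vector n a) c))\<^sup>2) = 1"
    using sum_haar_entry_sq[OF a] unfolding haar_parseval[symmetric] haar_vector_def by simp
  then have "(\<Sum>c\<in>haar_index n - {a}. (cmod (haar_coef n (haar_vector n a) c))\<^sup>2) = 0"
    using a self by (simp add: sum.remove)
  then have "b \<noteq> a \<Longrightarrow> haar_coef n (haar_vector n a) b = 0"
    using b by (subst (asm) sum_nonneg_eq_0_iff) auto
  then show ?thesis using self by auto
qed

definition haar_synth :: "nat \<Rightarrow> (haar_idx \<Rightarrow> complex) \<Rightarrow> haar_idx set \<Rightarrow> arr" where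
  "haar_synth n c T = (\<lambda>p. if p \<in> grid (2^n) then (\<Sum>b\<in>T. c b * haar_vector n b p) else 0)"

lemma is_array_haar_synth: "is_array (2^n) (haar_synth n c T)"
  unfolding is_array_def haar_synth_def by simp

lemma haar_coef_haar_synth:
  assumes "T \<subseteq> haar_index n" "a \<in> haar_index n"
  shows "haar_coef n (haar_synth n c T) a = (if a \<in> T then c a else 0)"
proof -
  have "finite T" using assms(1) finite_haar_index by (rule finite_subset)
  have "haar_coef n (haar_synth n c T) a =
      (\<Sum>p\<in>grid (2^n). \<Sum>b\<in>T. c b * (haar_vector n b p * of_real (haar_entry n a p)))"
    unfolding haar_coef_def haar_synth_def
    by (intro sum.cong refl) (simp add: sum_distrib_right mult.assoc)
  also have "\<dots> = (\<Sum>b\<in>T. c b * haar_coef n (haar_vector n b) a)"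
    unfolding haar_coef_def sum_distrib_left by (rule sum.swap)
  also have "\<dots> = (\<Sum>b\<in>T. if b = a then c b else 0)"
    using assms by (intro sum.cong refl) (simp add: haar_coef_haar_vector subset_iff)
  finally show ?thesis using \<open>finite T\<close> by simp
qed

lemma haar_coef_diff: "haar_coef n (\<lambda>p. X p - Y p) a = haar_coef n X a - haar_coef n Y a"
  unfolding haar_coef_def by (simp add: sum_subtractf left_diff_distrib)

lemma haar_synth_haar_coef:
  assumes "is_array (2^n) W"
  shows "haar_synth n (haar_coef n W) (haar_index n) = W"
proof
  fix p
  define R where "R = (\<lambda>p. W p - haar_synth n (haar_coef n W) (haar_index n) p)"
  have "haar_coef n R a = 0" if "a \<in> haar_index n" for a
    unfolding R_def haar_coef_diff haar_coef_haar_synth[OF order.refl that] using that by simp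
  then have "(\<Sum>q\<in>grid (2^n). (cmod (R q))\<^sup>2) = 0"
    by (simp add: haar_parseval)
  then have "R q = 0" if "q \<in> grid (2^n)" for q
    using that by (simp add: sum_nonneg_eq_0_iff)
  moreover have "R q = 0" if "q \<notin> grid (2^n)" for q
    using assms that unfolding R_def is_array_def haar_synth_def by (cases q) simp
  ultimately have "R p = 0" by blast
  then show "haar_synth n (haar_coef n W) (haar_index n) p = W p"
    unfolding R_def by simp
qed

lemma haar_synth_UNION:
  assumes "finite I" "\<And>i. i \<in> I \<Longrightarrow> finite (B i)" "disjoint_family_on B I"
  shows "haar_synth n c (\<Union>i\<in>I. B i) = (\<lambda>p. \<Sum>i\<in>I. haar_synth n c (B i) p)"
proof
  fix p
  have union: "(\<Sum>b\<in>(\<Union>i\<in>I. B i). g b) = (\<Sum>i\<in>I. \<Sum>b\<in>B i. g b)"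
    for g :: "haar_idx \<Rightarrow> complex"
    using assms(2,3) unfolding disjoint_family_on_def by (intro sum.UNION_disjoint[OF assms(1)]) blast+
  show "haar_synth n c (\<Union>i\<in>I. B i) p = (\<Sum>i\<in>I. haar_synth n c (B i) p)"
    unfolding haar_synth_def
    by (cases "p \<in> grid (2^n)") (simp_all only: if_True if_False union sum.neutral_const)
qed

section \<open>Haar coefficients are controlled by the total variation\<close>

lemma norm_diff_le_sum_increments:
  fixes f :: "nat \<Rightarrow> 'a::real_normed_vector"
  assumes "x < L" "y < L"
  shows "norm (f x - f y) \<le> (\<Sum>t<L-1. norm (f (Suc t) - f t))"
proof -
  have ordered: "norm (f v - f u) \<le> (\<Sum>t<L-1. norm (f (Suc t) - f t))" if "u \<le> v" "v < L" for u v
  proof -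
    have "norm (f v - f u) \<le> (\<Sum>t=u..<v. norm (f (Suc t) - f t))"
      using sum_Suc_diff'[OF that(1), of f] by (metis norm_sum)
    also have "\<dots> \<le> (\<Sum>t<L-1. norm (f (Suc t) - f t))"
      using that by (intro sum_mono2) auto
    finally show ?thesis .
  qed
  show ?thesis
    using ordered[of y x] ordered[of x y] assms by (cases "y \<le> x") (auto simp: norm_minus_commute)
qed

lemma norm_diff_le_grid_path:
  fixes w :: arr
  assumes "x < L" "y < L" "x0 < L" "y0 < L"
  shows "cmod (w (x, y) - w (x0, y0)) \<le>
    (\<Sum>t<L-1. cmod (w (x, Suc t) - w (x, t))) + (\<Sum>t<L-1. cmod (w (Suc t, y0) - w (t, y0)))"
proof -
  have "cmod (w (x, y) - w (x0, y0)) \<le> cmod (w (x, y) - w (x, y0)) + cmod (w (x, y0) - w (x0, y0))"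
    by (rule order.trans[OF _ norm_triangle_ineq]) simp
  also have "\<dots> \<le> (\<Sum>t<L-1. cmod (w (x, Suc t) - w (x, t))) + (\<Sum>t<L-1. cmod (w (Suc t, y0) - w (t, y0)))"
    using norm_diff_le_sum_increments[of y L y0 "\<lambda>t. w (x, t)"]
      norm_diff_le_sum_increments[of x L x0 "\<lambda>t. w (t, y0)"] assms
    by (intro add_mono) auto
  finally show ?thesis .
qed

definition block_variation :: "nat \<Rightarrow> arr \<Rightarrow> real" where
  "block_variation L w =
     (\<Sum>y<L. \<Sum>t<L-1. cmod (w (Suc t, y) - w (t, y))) + (\<Sum>x<L. \<Sum>t<L-1. cmod (w (x, Suc t) - w (x, t)))"

lemma mean_zero_pairing_le_block_variation:
  fixes w :: arr and g :: "nat \<times> nat \<Rightarrow> real"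
  assumes g_le_1: "\<And>p. \<bar>g p\<bar> \<le> 1" and g_mean_zero: "(\<Sum>x<L. \<Sum>y<L. g (x, y)) = 0"
  shows "cmod (\<Sum>x<L. \<Sum>y<L. w (x, y) * of_real (g (x, y))) \<le> real L * block_variation L w"
proof -
  \<comment> \<open>As \<open>g\<close> has mean zero, \<open>w\<close> may be shifted by its value at any point \<open>p\<close>; average over
    all \<open>p\<close> and join each pair of points by a grid path.\<close>
  let ?S = "\<Sum>x<L. \<Sum>y<L. w (x, y) * of_real (g (x, y))"
  let ?vx = "\<lambda>y. \<Sum>t<L-1. cmod (w (Suc t, y) - w (t, y))"
  let ?vy = "\<lambda>x. \<Sum>t<L-1. cmod (w (x, Suc t) - w (x, t))"
  have centred: "?S = (\<Sum>x<L. \<Sum>y<L. (w (x, y) - w p) * of_real (g (x, y)))" for p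
  proof -
    have "(\<Sum>x<L. \<Sum>y<L. (w (x, y) - w p) * of_real (g (x, y))) =
        ?S - w p * of_real (\<Sum>x<L. \<Sum>y<L. g (x, y))"
      by (simp add: algebra_simps sum_subtractf sum_distrib_left)
    then show ?thesis using g_mean_zero by simp
  qed
  have pointwise: "cmod ((w (x, y) - w (x0, y0)) * of_real (g (x, y))) \<le> ?vy x + ?vx y0"
    if "x < L" "y < L" "x0 < L" "y0 < L" for x y x0 y0
    using g_le_1[of "(x, y)"] norm_diff_le_grid_path[OF that, of w]
    by (simp add: norm_mult) (meson mult_left_le norm_ge_zero order_trans)
  have "real L * real L * cmod ?S = cmod (\<Sum>x0<L. \<Sum>y0<L. ?S)"
    by (simp add: norm_mult)
  also have "\<dots> = cmod (\<Sum>x0<L. \<Sum>y0<L. \<Sum>x<L. \<Sum>y<L. (w (x, y) - w (x0, y0)) * of_real (g (x, y)))"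
    using centred by simp
  also have "\<dots> \<le> (\<Sum>x0<L. \<Sum>y0<L. \<Sum>x<L. \<Sum>y<L. cmod ((w (x, y) - w (x0, y0)) * of_real (g (x, y))))"
    by (intro order.trans[OF norm_sum sum_mono] order.trans[OF norm_sum sum_mono]
        order.trans[OF norm_sum sum_mono] norm_sum)
  also have "\<dots> \<le> (\<Sum>x0<L. \<Sum>y0<L. \<Sum>x<L. \<Sum>y<L. ?vy x + ?vx y0)"
    by (intro sum_mono pointwise) auto
  also have "\<dots> = real L * real L * (real L * block_variation L w)"
    unfolding block_variation_def
    by (simp add: sum.distrib sum_distrib_left algebra_simps sum.swap[of _ "{..<L}" "{..<L}"])
  finally show ?thesis
    by (cases "L = 0") (simp_all add: block_variation_def)
qed

lemma sum_haar_vec_block: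
  fixes F :: "nat \<Rightarrow> complex"
  assumes "k < K"
  shows "(\<Sum>a<K * 2^d. F a * of_real (haar_vec e d k a)) =
    (\<Sum>x<(2::nat)^d. F (k * 2^d + x) * of_real (haar_vec e d 0 x))"
proof -
  let ?L = "(2::nat)^d"
  have "Suc k * ?L \<le> K * ?L" using assms by (intro mult_le_mono1) simp
  then have "(\<Sum>a<K * ?L. F a * of_real (haar_vec e d k a)) =
      (\<Sum>a\<in>{k*?L..<k*?L+?L}. F a * of_real (haar_vec e d k a))"
  proof (intro sum.mono_neutral_right)
    show "{k*?L..<k*?L+?L} \<subseteq> {..<K * ?L}" using \<open>Suc k * ?L \<le> K * ?L\<close> by auto
    show "\<forall>a\<in>{..<K * ?L} - {k*?L..<k*?L+?L}. F a * of_real (haar_vec e d k a) = 0"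
      unfolding haar_vec_def by (auto simp: div_eq_iff_mult_bounds algebra_simps)
  qed simp
  also have "\<dots> = (\<Sum>x<?L. F (k * ?L + x) * of_real (haar_vec e d k (k * ?L + x)))"
    using sum.shift_bounds_nat_ivl[of _ 0 "k*?L" ?L] by (simp add: atLeast0LessThan add.commute)
  also have "\<dots> = (\<Sum>x<?L. F (k * ?L + x) * of_real (haar_vec e d 0 x))"
    unfolding haar_vec_def by (intro sum.cong refl) simp
  finally show ?thesis .
qed

definition arr_block :: "nat \<Rightarrow> nat \<times> nat \<Rightarrow> arr \<Rightarrow> arr" where
  "arr_block L k W = (\<lambda>p. W (fst k * L + fst p, snd k * L + snd p))"

lemma haar_coef_local:
  assumes "j < n" "k \<in> grid (2^j)"
  shows "haar_coef n W (Some (e, j, k)) = of_real (2^j / 2^n) *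
    (\<Sum>x<(2::nat)^(n-j). \<Sum>y<(2::nat)^(n-j). arr_block (2^(n-j)) k W (x, y)
        * of_real (haar_vec (fst e) (n-j) 0 x * haar_vec (snd e) (n-j) 0 y))"
proof -
  let ?d = "n - j"
  have n: "(2::nat)^n = 2^j * 2^?d" using assms(1) by (simp flip: power_add)
  have "fst k < 2^j" "snd k < 2^j" using assms(2) unfolding grid_def by auto
  note blocks = this[THEN sum_haar_vec_block[where d = "n - j"], unfolded n[symmetric]]
  have "haar_coef n W (Some (e, j, k)) = of_real (2^j / 2^n) *
      (\<Sum>a<2^n. (\<Sum>c<2^n. W (a, c) * of_real (haar_vec (snd e) ?d (snd k) c))
        * of_real (haar_vec (fst e) ?d (fst k) a))"
    unfolding haar_coef_def sum_grid haar_entry_def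
    by (simp add: sum_distrib_left sum_distrib_right algebra_simps)
  also have "\<dots> = of_real (2^j / 2^n) *
      (\<Sum>x<(2::nat)^?d. (\<Sum>y<(2::nat)^?d. W (fst k * 2^?d + x, snd k * 2^?d + y)
        * of_real (haar_vec (snd e) ?d 0 y)) * of_real (haar_vec (fst e) ?d 0 x))"
    by (simp add: blocks)
  finally show ?thesis
    unfolding arr_block_def by (simp add: sum_distrib_left sum_distrib_right algebra_simps)
qed

lemma haar_coef_le_block_variation:
  assumes "j < n" "k \<in> grid (2^j)" "e \<in> {(0,1),(1,0),(1,1)}"
  shows "cmod (haar_coef n W (Some (e, j, k))) \<le> block_variation (2^(n-j)) (arr_block (2^(n-j)) k W)"
proof -
  let ?d = "n - j"
  let ?L = "(2::nat)^(n-j)"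
  let ?g = "\<lambda>p. haar_vec (fst e) ?d 0 (fst p) * haar_vec (snd e) ?d 0 (snd p)"
  let ?S = "\<Sum>x<?L. \<Sum>y<?L. arr_block ?L k W (x, y) * of_real (?g (x, y))"
  have "?d \<ge> 1" using assms(1) by simp
  have "(\<Sum>x<?L. \<Sum>y<?L. ?g (x, y)) =
      (\<Sum>x<?L. haar_vec (fst e) ?d 0 x) * (\<Sum>y<?L. haar_vec (snd e) ?d 0 y)"
    by (simp add: sum_product)
  also have "\<dots> = 0" using assms(3) sum_haar_vec_eq_0[OF \<open>?d \<ge> 1\<close>] by auto
  finally have "cmod ?S \<le> real ?L * block_variation ?L (arr_block ?L k W)"
    by (intro mean_zero_pairing_le_block_variation)
      (simp_all add: abs_mult mult_le_one abs_haar_vec_le_1)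
  moreover have "(2::real)^n = 2^j * real ?L" using assms(1) by (simp flip: power_add)
  ultimately have "2^j / 2^n * cmod ?S \<le> block_variation ?L (arr_block ?L k W)"
    by (simp add: field_simps)
  then show ?thesis unfolding haar_coef_local[OF assms(1,2)] norm_mult norm_of_real by simp
qed

lemma sum_grad_index:
  "(\<Sum>q\<in>grad_index N. f q) = (\<Sum>a<N. \<Sum>c<N. f (a, c, 0) + f (a, c, 1))"
proof -
  have "(\<Sum>q\<in>grad_index N. f q) = (\<Sum>a<N. \<Sum>c<N. \<Sum>i<2. f (a, c, i))"
    unfolding grad_index_def by (simp add: sum.cartesian_product atLeast0LessThan)
  then show ?thesis by (simp add: numeral_2_eq_2)
qed

lemma tv_norm_eq_sum_grid:
  "tv_norm N W = (\<Sum>p\<in>grid N. cmod (grad N W (fst p, snd p, 0)) + cmod (grad N W (fst p, snd p, 1)))"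
  unfolding tv_norm_def sum_grad_index sum_grid by simp

lemma block_variation_le_sum_grad:
  assumes "k \<in> grid K"
  shows "block_variation L (arr_block L k W) \<le>
    (\<Sum>q\<in>grid L. cmod (grad (K*L) W (fst k * L + fst q, snd k * L + snd q, 0))
                 + cmod (grad (K*L) W (fst k * L + fst q, snd k * L + snd q, 1)))"
proof -
  let ?g = "\<lambda>a c i. cmod (grad (K*L) W (fst k * L + a, snd k * L + c, i))"
  have inside: "fst k * L + Suc t < K * L" "snd k * L + Suc t < K * L" if "t < L - 1" for t
    using mult_add_less_mult[of "fst k" K "Suc t" L] mult_add_less_mult[of "snd k" K "Suc t" L]
      assms that unfolding grid_def by auto
  have "(\<Sum>y<L. \<Sum>t<L-1. cmod (arr_block L k W (Suc t, y) - arr_block L k W (t, y))) =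
      (\<Sum>y<L. \<Sum>t<L-1. ?g t y 0)"
    using inside unfolding arr_block_def grad_def by (intro sum.cong refl) auto
  also have "\<dots> \<le> (\<Sum>y<L. \<Sum>t<L. ?g t y 0)"
    by (intro sum_mono sum_mono2) auto
  also have "\<dots> = (\<Sum>t<L. \<Sum>y<L. ?g t y 0)"
    by (rule sum.swap)
  finally have x_part: "(\<Sum>y<L. \<Sum>t<L-1. cmod (arr_block L k W (Suc t, y) - arr_block L k W (t, y)))
      \<le> (\<Sum>t<L. \<Sum>y<L. ?g t y 0)" .
  have "(\<Sum>x<L. \<Sum>t<L-1. cmod (arr_block L k W (x, Suc t) - arr_block L k W (x, t))) =
      (\<Sum>x<L. \<Sum>t<L-1. ?g x t 1)"
    using inside unfolding arr_block_def grad_def by (intro sum.cong refl) auto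
  also have "\<dots> \<le> (\<Sum>x<L. \<Sum>t<L. ?g x t 1)"
    by (intro sum_mono sum_mono2) auto
  finally show ?thesis
    using x_part unfolding block_variation_def sum_grid by (simp add: sum.distrib)
qed

lemma sum_block_variation_le_tv_norm:
  "(\<Sum>k\<in>grid K. block_variation L (arr_block L k W)) \<le> tv_norm (K*L) W"
  unfolding tv_norm_eq_sum_grid sum_grid_blocks[where K = K and L = L]
  by (simp only: fst_conv snd_conv, intro sum_mono block_variation_le_sum_grad, assumption)

lemma sum_haar_index_minus_None:
  fixes F :: "haar_idx \<Rightarrow> 'a::ab_group_add"
  shows "(\<Sum>b\<in>haar_index n - {None}. F b) =
    (\<Sum>j<n. \<Sum>k\<in>grid (2^j). \<Sum>e\<in>{(0,1),(1,0),(1,1)}. F (Some (e, j, k)))"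
proof -
  have "None \<in> haar_index n" for n unfolding haar_index_def by simp
  then have "(\<Sum>b\<in>haar_index n - {None}. F b) = (\<Sum>b\<in>haar_index n. F b) - F None" for n
    by (simp add: sum_diff1)
  then show ?thesis
    by (induction n) (simp_all add: haar_index_0 sum_haar_index_Suc)
qed

lemma haar_coef_l1_le_tv_norm:
  "(\<Sum>b\<in>haar_index n - {None}. cmod (haar_coef n W b)) \<le> 3 * real n * tv_norm (2^n) W"
proof -
  have "(\<Sum>b\<in>haar_index n - {None}. cmod (haar_coef n W b)) =
      (\<Sum>j<n. \<Sum>e\<in>{(0,1),(1,0),(1,1)}. \<Sum>k\<in>grid (2^j). cmod (haar_coef n W (Some (e, j, k))))"
    unfolding sum_haar_index_minus_None by (rule sum.cong[OF refl], rule sum.swap)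
  also have "\<dots> \<le> (\<Sum>j<n. \<Sum>e\<in>{(0::nat,1::nat),(1,0),(1,1)}. tv_norm (2^n) W)"
  proof (intro sum_mono)
    fix j e assume "j \<in> {..<n}" "e \<in> {(0::nat,1::nat),(1,0),(1,1)}"
    then have "(\<Sum>k\<in>grid (2^j). cmod (haar_coef n W (Some (e, j, k)))) \<le>
        (\<Sum>k\<in>grid (2^j). block_variation (2^(n-j)) (arr_block (2^(n-j)) k W))"
      by (intro sum_mono haar_coef_le_block_variation) auto
    also have "\<dots> \<le> tv_norm (2^j * 2^(n-j)) W"
      by (rule sum_block_variation_le_tv_norm)
    finally show "(\<Sum>k\<in>grid (2^j). cmod (haar_coef n W (Some (e, j, k)))) \<le> tv_norm (2^n) W"
      using \<open>j \<in> {..<n}\<close> by (simp flip: power_add)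
  qed
  also have "\<dots> = 3 * real n * tv_norm (2^n) W" by simp
  finally show ?thesis .
qed

section \<open>The gradient of an error array\<close>

lemma grad_diff: "grad N (\<lambda>p. X p - Y p) q = grad N X q - grad N Y q"
  unfolding grad_def by (cases q) auto

lemma finite_grad_index [simp]: "finite (grad_index N)"
  unfolding grad_index_def by simp

lemma sum_shift_le:
  fixes f :: "nat \<Rightarrow> real"
  assumes "\<And>i. f i \<ge> 0" "f N = 0"
  shows "(\<Sum>a<N. f (Suc a)) \<le> (\<Sum>a<N. f a)"
  using sum.lessThan_Suc_shift[of f N] assms by simp

lemma sum_grad_sq_le:
  assumes "is_array N D"
  shows "(\<Sum>q\<in>grad_index N. (cmod (grad N D q))\<^sup>2) \<le> 8 * (\<Sum>p\<in>grid N. (cmod (D p))\<^sup>2)"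
proof -
  let ?d = "\<lambda>a c. (cmod (D (a, c)))\<^sup>2"
  have sq_diff: "(cmod (x - y))\<^sup>2 \<le> 2 * (cmod x)\<^sup>2 + 2 * (cmod y)\<^sup>2" for x y :: complex
    using power_mono[OF norm_triangle_ineq4[of x y] norm_ge_zero, of 2] sum_squares_bound[of "cmod x" "cmod y"]
    by (simp add: power2_eq_square algebra_simps)
  have "?d N c = 0" "?d c N = 0" for c
    using assms unfolding is_array_def grid_def by auto
  then have shift: "(\<Sum>a<N. ?d (Suc a) c) \<le> (\<Sum>a<N. ?d a c)" "(\<Sum>a<N. ?d c (Suc a)) \<le> (\<Sum>a<N. ?d c a)" for c
    by (intro sum_shift_le; simp)+
  have "(\<Sum>a<N. \<Sum>c<N. ?d (Suc a) c) = (\<Sum>c<N. \<Sum>a<N. ?d (Suc a) c)"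
    by (rule sum.swap)
  also have "\<dots> \<le> (\<Sum>c<N. \<Sum>a<N. ?d a c)"
    by (intro sum_mono shift(1))
  also have "\<dots> = (\<Sum>a<N. \<Sum>c<N. ?d a c)"
    by (rule sum.swap)
  finally have shift_x: "(\<Sum>a<N. \<Sum>c<N. ?d (Suc a) c) \<le> (\<Sum>a<N. \<Sum>c<N. ?d a c)" .
  have shift_y: "(\<Sum>a<N. \<Sum>c<N. ?d a (Suc c)) \<le> (\<Sum>a<N. \<Sum>c<N. ?d a c)"
    by (intro sum_mono shift(2))
  have "(\<Sum>q\<in>grad_index N. (cmod (grad N D q))\<^sup>2) =
      (\<Sum>a<N. \<Sum>c<N. (cmod (grad N D (a, c, 0)))\<^sup>2 + (cmod (grad N D (a, c, 1)))\<^sup>2)"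
    by (rule sum_grad_index)
  also have "\<dots> \<le> (\<Sum>a<N. \<Sum>c<N. (2 * ?d (Suc a) c + 2 * ?d a c) + (2 * ?d a (Suc c) + 2 * ?d a c))"
    by (intro sum_mono add_mono) (auto simp: grad_def sq_diff)
  also have "\<dots> = 2 * (\<Sum>a<N. \<Sum>c<N. ?d (Suc a) c) + 2 * (\<Sum>a<N. \<Sum>c<N. ?d a (Suc c))
      + 4 * (\<Sum>a<N. \<Sum>c<N. ?d a c)"
    by (simp add: sum.distrib sum_distrib_left)
  also have "\<dots> \<le> 8 * (\<Sum>a<N. \<Sum>c<N. ?d a c)"
    using shift_x shift_y by simp
  also have "\<dots> = 8 * (\<Sum>p\<in>grid N. (cmod (D p))\<^sup>2)"
    unfolding sum_grid ..
  finally show ?thesis .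
qed

lemma tv_norm_diff_cone:
  assumes S: "S \<subseteq> grad_index N" and tv: "tv_norm N Xh \<le> tv_norm N X"
  shows "tv_norm N (\<lambda>p. X p - Xh p) \<le> 2 * (\<Sum>q\<in>S. cmod (grad N (\<lambda>p. X p - Xh p) q))
           + 2 * (\<Sum>q\<in>grad_index N - S. cmod (grad N X q))"
proof -
  let ?D = "\<lambda>p. X p - Xh p"
  have Xh: "grad N Xh q = grad N X q - grad N ?D q" for q
    unfolding grad_diff by simp
  have split: "(\<Sum>q\<in>grad_index N. f q) = (\<Sum>q\<in>S. f q) + (\<Sum>q\<in>grad_index N - S. f q)"
    for f :: "_ \<Rightarrow> real"
    using sum.subset_diff[OF S finite_grad_index] by (simp add: add.commute)
  have on_S: "(\<Sum>q\<in>S. cmod (grad N X q)) - (\<Sum>q\<in>S. cmod (grad N ?D q)) \<le> (\<Sum>q\<in>S. cmod (grad N Xh q))"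
    unfolding Xh sum_subtractf[symmetric] by (intro sum_mono norm_triangle_ineq2)
  have off_S: "(\<Sum>q\<in>grad_index N - S. cmod (grad N ?D q)) - (\<Sum>q\<in>grad_index N - S. cmod (grad N X q))
       \<le> (\<Sum>q\<in>grad_index N - S. cmod (grad N Xh q))"
    unfolding Xh sum_subtractf[symmetric]
    by (intro sum_mono) (metis norm_minus_commute norm_triangle_ineq2)
  show ?thesis
    using tv on_S off_S split[of "\<lambda>q. cmod (grad N X q)"] split[of "\<lambda>q. cmod (grad N Xh q)"]
      split[of "\<lambda>q. cmod (grad N ?D q)"]
    unfolding tv_norm_def by linarith
qed

lemma grad_tail_attained:
  obtains S where "S \<subseteq> grad_index N" "card S \<le> s"
    "grad_tail N s X = (\<Sum>q\<in>grad_index N - S. cmod (grad N X q))"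
proof -
  let ?Ss = "{S. S \<subseteq> grad_index N \<and> card S \<le> s}"
  have "finite ?Ss" by (rule finite_subset[of _ "Pow (grad_index N)"]) auto
  moreover have "{} \<in> ?Ss" by simp
  ultimately have "grad_tail N s X \<in> (\<lambda>S. \<Sum>q\<in>grad_index N - S. cmod (grad N X q)) ` ?Ss"
    unfolding grad_tail_def by (intro Min_in) auto
  then show ?thesis using that by blast
qed

lemma sum_le_sqrt_card_mult_L2_set:
  fixes f :: "'a \<Rightarrow> real"
  assumes "finite T" "S \<subseteq> T" "\<And>q. f q \<ge> 0"
  shows "(\<Sum>q\<in>S. f q) \<le> sqrt (real (card S)) * L2_set f T"
proof -
  have "(\<Sum>q\<in>S. f q) = (\<Sum>q\<in>S. \<bar>f q\<bar> * \<bar>1\<bar>)" using assms(3) by simp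
  also have "\<dots> \<le> L2_set f S * L2_set (\<lambda>_. 1) S" by (rule L2_set_mult_ineq)
  also have "\<dots> = L2_set f S * sqrt (real (card S))"
    by (simp add: L2_set_constant)
  also have "\<dots> \<le> L2_set f T * sqrt (real (card S))"
    unfolding L2_set_def using assms by (intro mult_right_mono real_sqrt_le_mono sum_mono2) auto
  finally show ?thesis by (simp add: mult.commute)
qed

lemma grad_tail_nonneg: "grad_tail N s X \<ge> 0"
  by (rule grad_tail_attained[of N s X]) (simp add: sum_nonneg)

lemma tv_norm_diff_le:
  assumes "is_array N X" "is_array N Xh" "tv_norm N Xh \<le> tv_norm N X"
  shows "tv_norm N (\<lambda>p. X p - Xh p) \<le>
    6 * sqrt (real s) * arr_norm2 N (\<lambda>p. X p - Xh p) + 2 * grad_tail N s X"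
proof -
  let ?D = "\<lambda>p. X p - Xh p"
  obtain S where S: "S \<subseteq> grad_index N" "card S \<le> s"
    and tail: "grad_tail N s X = (\<Sum>q\<in>grad_index N - S. cmod (grad N X q))"
    by (rule grad_tail_attained)
  have "L2_set (\<lambda>q. cmod (grad N ?D q)) (grad_index N) \<le> sqrt 8 * arr_norm2 N ?D"
    using sum_grad_sq_le[of N ?D] assms(1,2)
    unfolding L2_set_def arr_norm2_def by (simp add: is_array_def real_sqrt_mult[symmetric])
  also have "\<dots> \<le> 3 * arr_norm2 N ?D"
    using real_sqrt_le_iff[of 8 9] by (intro mult_right_mono) (simp_all add: arr_norm2_def sum_nonneg)
  finally have L2: "L2_set (\<lambda>q. cmod (grad N ?D q)) (grad_index N) \<le> 3 * arr_norm2 N ?D" .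
  have "(\<Sum>q\<in>S. cmod (grad N ?D q)) \<le>
      sqrt (real (card S)) * L2_set (\<lambda>q. cmod (grad N ?D q)) (grad_index N)"
    by (rule sum_le_sqrt_card_mult_L2_set[OF finite_grad_index S(1)]) simp
  also have "\<dots> \<le> sqrt (real s) * (3 * arr_norm2 N ?D)"
    using L2 S(2) by (intro mult_mono) auto
  finally have "(\<Sum>q\<in>S. cmod (grad N ?D q)) \<le> sqrt (real s) * (3 * arr_norm2 N ?D)" .
  then show ?thesis
    using tv_norm_diff_cone[OF S(1) assms(3)] unfolding tail by linarith
qed

lemma vec_norm2_eq_L2_set: "vec_norm2 m v = L2_set (\<lambda>i. cmod (v i)) {..<m}"
  unfolding vec_norm2_def L2_set_def ..

lemma vec_norm2_nonneg: "vec_norm2 m v \<ge> 0"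
  unfolding vec_norm2_eq_L2_set by simp

lemma vec_norm2_add_le: "vec_norm2 m (\<lambda>i. u i + v i) \<le> vec_norm2 m u + vec_norm2 m v"
  unfolding vec_norm2_eq_L2_set
  by (rule order.trans[OF L2_set_mono L2_set_triangle_ineq]) (simp_all add: norm_triangle_ineq)

lemma vec_norm2_diff_le: "vec_norm2 m (\<lambda>i. u i - v i) \<le> vec_norm2 m u + vec_norm2 m v"
  unfolding vec_norm2_eq_L2_set
  by (rule order.trans[OF L2_set_mono L2_set_triangle_ineq]) (simp_all add: norm_triangle_ineq4)

lemma vec_norm2_uminus: "vec_norm2 m (\<lambda>i. - v i) = vec_norm2 m v"
  unfolding vec_norm2_def by simp

lemma vec_norm2_sum_le:
  "finite J \<Longrightarrow> vec_norm2 m (\<lambda>i. \<Sum>j\<in>J. v j i) \<le> (\<Sum>j\<in>J. vec_norm2 m (v j))"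
proof (induction J rule: finite_induct)
  case empty
  then show ?case unfolding vec_norm2_def by simp
next
  case (insert x F)
  then show ?case
    using vec_norm2_add_le[of m "v x" "\<lambda>i. \<Sum>j\<in>F. v j i"] by simp
qed

lemma is_array_diff: "is_array N X \<Longrightarrow> is_array N Y \<Longrightarrow> is_array N (\<lambda>p. X p - Y p)"
  unfolding is_array_def by simp

lemma is_array_sum: "(\<And>j. j \<in> J \<Longrightarrow> is_array N (V j)) \<Longrightarrow> is_array N (\<lambda>p. \<Sum>j\<in>J. V j p)"
  unfolding is_array_def by simp

lemma linear_meas_add:
  "linear_meas N m A \<Longrightarrow> is_array N X \<Longrightarrow> is_array N Y \<Longrightarrow> A (\<lambda>p. X p + Y p) = (\<lambda>i. A X i + A Y i)"
  unfolding linear_meas_def by blast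

lemma linear_meas_scale:
  "linear_meas N m A \<Longrightarrow> is_array N X \<Longrightarrow> A (\<lambda>p. c * X p) = (\<lambda>i. c * A X i)"
  unfolding linear_meas_def by blast

lemma linear_meas_diff:
  assumes "linear_meas N m A" "is_array N X" "is_array N Y"
  shows "A (\<lambda>p. X p - Y p) = (\<lambda>i. A X i - A Y i)"
proof -
  have "is_array N (\<lambda>p. (-1) * Y p)" using assms(3) unfolding is_array_def by simp
  then have "A (\<lambda>p. X p + (-1) * Y p) = (\<lambda>i. A X i + A (\<lambda>p. (-1) * Y p) i)"
    by (rule linear_meas_add[OF assms(1,2)])
  then show ?thesis using linear_meas_scale[OF assms(1,3), of "-1"] by simp
qed

lemma linear_meas_sum:
  assumes "linear_meas N m A" "finite J" "\<And>j. j \<in> J \<Longrightarrow> is_array N (V j)"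
  shows "A (\<lambda>p. \<Sum>j\<in>J. V j p) = (\<lambda>i. \<Sum>j\<in>J. A (V j) i)"
  using assms(2,3)
proof (induction J rule: finite_induct)
  case empty
  have "is_array N (\<lambda>p. 0)" unfolding is_array_def by simp
  then show ?case using linear_meas_scale[OF assms(1), of "\<lambda>p. 0" 0] by simp
next
  case (insert x F)
  then show ?case
    using linear_meas_add[OF assms(1), of "V x" "\<lambda>p. \<Sum>j\<in>F. V j p"] by (simp add: is_array_sum)
qed

lemma vec_norm2_meas_diff_le:
  assumes "linear_meas N m A" "is_array N X" "is_array N Xh"
    and "vec_norm2 m (\<lambda>i. A X i - y i) \<le> \<epsilon>" "vec_norm2 m (\<lambda>i. A Xh i - y i) \<le> \<epsilon>"
  shows "vec_norm2 m (A (\<lambda>p. X p - Xh p)) \<le> 2 * \<epsilon>"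
proof -
  have "A (\<lambda>p. X p - Xh p) = (\<lambda>i. (A X i - y i) - (A Xh i - y i))"
    using linear_meas_diff[OF assms(1-3)] by simp
  then have "vec_norm2 m (A (\<lambda>p. X p - Xh p)) \<le>
      vec_norm2 m (\<lambda>i. A X i - y i) + vec_norm2 m (\<lambda>i. A Xh i - y i)"
    by (simp only: vec_norm2_diff_le)
  then show ?thesis using assms(4,5) by linarith
qed

lemma rip_haar_haar_synth:
  assumes "rip_haar n m A \<tau> \<delta>" "T \<subseteq> haar_index n" "real (card T) \<le> \<tau>"
  shows "(1 - \<delta>) * (L2_set (\<lambda>b. cmod (c b)) T)\<^sup>2 \<le> (vec_norm2 m (A (haar_synth n c T)))\<^sup>2"
    and "(vec_norm2 m (A (haar_synth n c T)))\<^sup>2 \<le> (1 + \<delta>) * (L2_set (\<lambda>b. cmod (c b)) T)\<^sup>2"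
proof -
  let ?Z = "haar_synth n c T"
  have finite_T: "finite T" using assms(2) finite_haar_index by (rule finite_subset)
  have transform: "haar_transform n ?Z b = (if b \<in> T then c b else 0)" for b
    using assms(2) by (auto simp: haar_transform_eq_haar_coef haar_coef_haar_synth)
  then have "card {b\<in>haar_index n. haar_transform n ?Z b \<noteq> 0} \<le> card T"
    using finite_T by (intro card_mono) auto
  then have sparse: "real (card {b\<in>haar_index n. haar_transform n ?Z b \<noteq> 0}) \<le> \<tau>"
    using assms(3) by linarith
  have "(coef_norm2 n (haar_transform n ?Z))\<^sup>2 = (\<Sum>b\<in>haar_index n. (cmod (if b \<in> T then c b else 0))\<^sup>2)"
    unfolding coef_norm2_def transform by (simp add: sum_nonneg)
  also have "\<dots> = (\<Sum>b\<in>haar_index n. if b \<in> T then (cmod (c b))\<^sup>2 else 0)"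
    by (intro sum.cong) simp_all
  also have "\<dots> = (L2_set (\<lambda>b. cmod (c b)) T)\<^sup>2"
    using assms(2) finite_T by (simp add: sum.If_cases Int_absorb1 L2_set_def sum_nonneg)
  finally have norm: "(coef_norm2 n (haar_transform n ?Z))\<^sup>2 = (L2_set (\<lambda>b. cmod (c b)) T)\<^sup>2" .
  have "(1 - \<delta>) * (coef_norm2 n (haar_transform n ?Z))\<^sup>2 \<le> (vec_norm2 m (A ?Z))\<^sup>2 \<and>
      (vec_norm2 m (A ?Z))\<^sup>2 \<le> (1 + \<delta>) * (coef_norm2 n (haar_transform n ?Z))\<^sup>2"
    using assms(1) is_array_haar_synth sparse unfolding rip_haar_def by blast
  then show "(1 - \<delta>) * (L2_set (\<lambda>b. cmod (c b)) T)\<^sup>2 \<le> (vec_norm2 m (A ?Z))\<^sup>2"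
    and "(vec_norm2 m (A ?Z))\<^sup>2 \<le> (1 + \<delta>) * (L2_set (\<lambda>b. cmod (c b)) T)\<^sup>2"
    unfolding norm by simp_all
qed

lemma rip_haar_haar_synth_norm:
  assumes "rip_haar n m A \<tau> \<delta>" "\<delta> < 1/3" "T \<subseteq> haar_index n" "real (card T) \<le> \<tau>"
  shows "4/5 * L2_set (\<lambda>b. cmod (c b)) T \<le> vec_norm2 m (A (haar_synth n c T))"
    and "vec_norm2 m (A (haar_synth n c T)) \<le> 6/5 * L2_set (\<lambda>b. cmod (c b)) T"
proof -
  let ?x = "L2_set (\<lambda>b. cmod (c b)) T" and ?v = "vec_norm2 m (A (haar_synth n c T))"
  note rip = rip_haar_haar_synth[OF assms(1,3,4), of c]
  have "(4/5 * ?x)\<^sup>2 = 16/25 * ?x\<^sup>2" by (simp add: power2_eq_square)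
  also have "\<dots> \<le> (1 - \<delta>) * ?x\<^sup>2" using assms(2) by (intro mult_right_mono) auto
  also have "\<dots> \<le> ?v\<^sup>2" by (rule rip(1))
  finally show "4/5 * ?x \<le> ?v" using vec_norm2_nonneg by (rule power2_le_imp_le)
  have "?v\<^sup>2 \<le> (1 + \<delta>) * ?x\<^sup>2" by (rule rip(2))
  also have "\<dots> \<le> 36/25 * ?x\<^sup>2" using assms(2) by (intro mult_right_mono) auto
  also have "\<dots> = (6/5 * ?x)\<^sup>2" by (simp add: power2_eq_square)
  finally show "?v \<le> 6/5 * ?x" by (rule power2_le_imp_le) simp
qed

section \<open>Shelling a decreasing sequence into blocks\<close>

lemma sum_sqrt_blocks_le:
  fixes a :: "nat \<Rightarrow> real"
  assumes nonneg: "\<And>i. a i \<ge> 0" and decreasing: "\<And>i j. i \<le> j \<Longrightarrow> a j \<le> a i" and "t \<ge> 1"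
  shows "(\<Sum>j<K. sqrt (\<Sum>i\<in>{Suc j * t..<Suc j * t + t}. (a i)\<^sup>2)) \<le> (\<Sum>i<K * t. a i) / sqrt t"
proof -
  have block: "sqrt (\<Sum>i\<in>{Suc j * t..<Suc j * t + t}. (a i)\<^sup>2) \<le> (\<Sum>i\<in>{j * t..<j * t + t}. a i) / sqrt t"
    for j
  proof -
    let ?A = "\<Sum>i\<in>{j * t..<j * t + t}. a i"
    \<comment> \<open>every entry of the next block is at most the mean of this one\<close>
    have "a i \<le> ?A / t" if "i \<in> {Suc j * t..<Suc j * t + t}" for i
    proof -
      have "(\<Sum>q\<in>{j * t..<j * t + t}. a i) \<le> ?A" using that by (intro sum_mono decreasing) auto
      then show ?thesis using \<open>t \<ge> 1\<close> by (simp add: field_simps)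
    qed
    then have "(\<Sum>i\<in>{Suc j * t..<Suc j * t + t}. (a i)\<^sup>2) \<le> (\<Sum>i\<in>{Suc j * t..<Suc j * t + t}. (?A / t)\<^sup>2)"
      using nonneg by (intro sum_mono power_mono) auto
    also have "\<dots> = (?A / sqrt t)\<^sup>2"
      using \<open>t \<ge> 1\<close> by (simp add: power_divide power2_eq_square)
    finally have "sqrt (\<Sum>i\<in>{Suc j * t..<Suc j * t + t}. (a i)\<^sup>2) \<le> sqrt ((?A / sqrt t)\<^sup>2)"
      by (rule real_sqrt_le_mono)
    also have "\<dots> = ?A / sqrt t" using nonneg by (simp add: sum_nonneg)
    finally show ?thesis .
  qed
  have "(\<Sum>j<K. sqrt (\<Sum>i\<in>{Suc j * t..<Suc j * t + t}. (a i)\<^sup>2)) \<le>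
      (\<Sum>j<K. (\<Sum>i\<in>{j * t..<j * t + t}. a i) / sqrt t)"
    by (intro sum_mono block)
  also have "\<dots> = (\<Sum>i<K * t. a i) / sqrt t"
    by (simp add: sum_divide_distrib[symmetric] sum.nat_group)
  finally show ?thesis .
qed

lemma lessThan_subset_UN_blocks:
  fixes t M :: nat
  assumes "t \<ge> 1"
  shows "{..<M} \<subseteq> (\<Union>j\<le>M. {j * t..<j * t + t})"
proof
  fix i assume "i \<in> {..<M}"
  moreover have "t > 0" using assms by simp
  ultimately have "i div t * t \<le> i" "i < i div t * t + t" "i div t \<le> M"
    using mod_less_divisor[of t i] div_mult_mod_eq[of i t] div_le_dividend[of i t]
    by (simp_all, linarith+)
  then show "i \<in> (\<Union>j\<le>M. {j * t..<j * t + t})"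
    by (intro UN_I[of "i div t"]) auto
qed

lemma disjoint_family_blocks:
  fixes t :: nat
  shows "disjoint_family (\<lambda>j. {j * t..<j * t + t})"
proof -
  have "i div t = j" if "i \<in> {j * t..<j * t + t}" for i j
    using that by (intro div_nat_eqI) (auto simp: mult.commute)
  then show ?thesis
    unfolding disjoint_family_on_def by (metis disjoint_iff)
qed

lemma distinct_list_blocks:
  fixes ys :: "'a list"
  assumes "distinct ys" "t \<ge> 1"
  defines "B \<equiv> \<lambda>j. (!) ys ` ({j * t..<j * t + t} \<inter> {..<length ys})"
  shows "set ys = (\<Union>j\<le>length ys. B j)"
    and "disjoint_family B"
    and "card (B j) \<le> t"
    and "(\<Sum>x\<in>B j. g x) = (\<Sum>i\<in>{j * t..<j * t + t}. if i < length ys then g (ys ! i) else 0)"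
proof -
  have inj: "inj_on ((!) ys) I" if "I \<subseteq> {..<length ys}" for I
    using inj_on_nth[OF assms(1)] that by auto
  have "(\<Union>j\<le>length ys. {j * t..<j * t + t} \<inter> {..<length ys}) = {..<length ys}"
    using lessThan_subset_UN_blocks[OF assms(2), of "length ys"] by blast
  moreover have "set ys = (!) ys ` {..<length ys}"
    by (auto simp: set_conv_nth)
  ultimately show "set ys = (\<Union>j\<le>length ys. B j)"
    unfolding B_def image_UN[symmetric] by simp
  show "disjoint_family B"
    unfolding disjoint_family_on_def
  proof (intro ballI impI)
    fix j j' :: nat
    assume "j \<noteq> j'"
    have "B j \<inter> B j' =
        (!) ys ` (({j * t..<j * t + t} \<inter> {..<length ys}) \<inter> ({j' * t..<j' * t + t} \<inter> {..<length ys}))"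
      unfolding B_def by (rule inj_on_image_Int[OF inj[OF order.refl], symmetric]) auto
    then show "B j \<inter> B j' = {}"
      using disjoint_family_onD[OF disjoint_family_blocks UNIV_I UNIV_I \<open>j \<noteq> j'\<close>, of t] by auto
  qed
  have "card (B j) \<le> card ({j * t..<j * t + t} \<inter> {..<length ys})"
    unfolding B_def by (rule card_image_le) simp
  also have "\<dots> \<le> card {j * t..<j * t + t}"
    by (intro card_mono) auto
  finally show "card (B j) \<le> t" by simp
  show "(\<Sum>x\<in>B j. g x) = (\<Sum>i\<in>{j * t..<j * t + t}. if i < length ys then g (ys ! i) else 0)"
    unfolding B_def sum.reindex[OF inj[OF Int_lower2]] comp_def
      sum.inter_restrict[OF finite_atLeastLessThan] by simp
qed

lemma shelling_partition:
  fixes f :: "'a \<Rightarrow> real"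
  assumes "finite R" "t \<ge> 1" "\<And>x. f x \<ge> 0"
  obtains B :: "nat \<Rightarrow> 'a set" and M where
    "R = (\<Union>j\<le>M. B j)" "disjoint_family B" "\<forall>j. card (B j) \<le> t"
    "(\<Sum>j\<in>{1..M}. L2_set f (B j)) \<le> (\<Sum>x\<in>R. f x) / sqrt t"
proof -
  obtain zs where zs: "set zs = R" "distinct zs"
    using finite_distinct_list[OF assms(1)] by blast
  define ys where "ys = sort_key (\<lambda>x. - f x) zs"
  define M where "M = length ys"
  define B where "B j = (!) ys ` ({j * t..<j * t + t} \<inter> {..<M})" for j
  define a where "a i = (if i < M then f (ys ! i) else 0)" for i
  have "distinct ys" "set ys = R" unfolding ys_def using zs by simp_all
  have blocks: "R = (\<Union>j\<le>M. B j)" "disjoint_family B" "card (B j) \<le> t"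
    and block_sum: "(\<Sum>x\<in>B j. g x) = (\<Sum>i\<in>{j * t..<j * t + t}. if i < M then g (ys ! i) else 0)"
    for j g
    using distinct_list_blocks[OF \<open>distinct ys\<close> assms(2)] \<open>set ys = R\<close>
    unfolding B_def[abs_def] M_def by simp_all
  have decreasing: "a j \<le> a i" if "i \<le> j" for i j
    using sorted_nth_mono[of "map (\<lambda>x. - f x) ys" i j] that assms(3)
    unfolding a_def M_def ys_def by auto
  have "(\<Sum>j\<in>{1..M}. L2_set f (B j)) = (\<Sum>j<M. sqrt (\<Sum>i\<in>{Suc j * t..<Suc j * t + t}. (a i)\<^sup>2))"
    unfolding L2_set_def block_sum a_def
    by (simp add: sum.atLeast1_atMost_eq if_distrib[of power2] cong: if_cong)
  also have "\<dots> \<le> (\<Sum>i<M * t. a i) / sqrt t"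
    using assms(2,3) decreasing by (intro sum_sqrt_blocks_le) (simp_all add: a_def)
  also have "\<dots> \<le> (\<Sum>i<Suc M * t. a i) / sqrt t"
    using assms(3) by (intro divide_right_mono sum_mono2) (auto simp: a_def)
  also have "(\<Sum>i<Suc M * t. a i) = (\<Sum>j\<le>M. \<Sum>x\<in>B j. f x)"
    unfolding block_sum a_def sum.nat_group[symmetric] lessThan_Suc_atMost ..
  also have "\<dots> = (\<Sum>x\<in>R. f x)"
    unfolding blocks(1) using blocks(2) unfolding disjoint_family_on_def
    by (intro sum.UNION_disjoint[symmetric]) (simp_all add: B_def)
  finally show ?thesis
    using that blocks by blast
qed

section \<open>Robust recovery from restricted isometry on Haar blocks\<close>

lemma arr_norm2_le_sum_L2_set_haar_coef:
  assumes "haar_index n = (\<Union>j\<in>J. T j)" "finite J" "disjoint_family_on T J"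
  shows "arr_norm2 (2^n) W \<le> (\<Sum>j\<in>J. L2_set (\<lambda>b. cmod (haar_coef n W b)) (T j))"
proof -
  let ?f = "\<lambda>b. cmod (haar_coef n W b)"
  have "finite (T j)" if "j \<in> J" for j
    using finite_haar_index[of n] that unfolding assms(1) by (meson UN_upper finite_subset)
  then have "(\<Sum>b\<in>haar_index n. (?f b)\<^sup>2) = (\<Sum>j\<in>J. (L2_set ?f (T j))\<^sup>2)"
    using assms(2,3) unfolding assms(1) disjoint_family_on_def
    by (simp add: sum.UNION_disjoint L2_set_def sum_nonneg)
  then have "arr_norm2 (2^n) W = L2_set (\<lambda>j. L2_set ?f (T j)) J"
    unfolding arr_norm2_def haar_parseval L2_set_def by simp
  also have "\<dots> \<le> (\<Sum>j\<in>J. L2_set ?f (T j))"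
    by (rule L2_set_le_sum) simp
  finally show ?thesis .
qed

lemma vec_norm2_meas_haar_block_le:
  assumes lin: "linear_meas (2^n) m A" and D: "is_array (2^n) D"
    and partition: "haar_index n = (\<Union>j\<in>insert j0 J. T j)" "finite J" "j0 \<notin> J"
      "disjoint_family_on T (insert j0 J)"
  shows "vec_norm2 m (A (haar_synth n (haar_coef n D) (T j0))) \<le>
    vec_norm2 m (A D) + (\<Sum>j\<in>J. vec_norm2 m (A (haar_synth n (haar_coef n D) (T j))))"
proof -
  let ?V = "\<lambda>j. haar_synth n (haar_coef n D) (T j)"
  have "finite (T j)" if "j \<in> insert j0 J" for j
    using finite_haar_index[of n] that unfolding partition(1) by (meson UN_upper finite_subset)
  then have "D = (\<lambda>p. \<Sum>j\<in>insert j0 J. ?V j p)"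
    using haar_synth_haar_coef[OF D] haar_synth_UNION[of "insert j0 J" T n "haar_coef n D"] partition
    by simp
  then have "A D = A (\<lambda>p. \<Sum>j\<in>insert j0 J. ?V j p)"
    by (rule arg_cong)
  also have "\<dots> = (\<lambda>i. \<Sum>j\<in>insert j0 J. A (?V j) i)"
    using partition(2) by (intro linear_meas_sum[OF lin]) (simp_all add: is_array_haar_synth)
  finally have "A D i = A (?V j0) i + (\<Sum>j\<in>J. A (?V j) i)" for i
    using partition(2,3) by simp
  then have "A (?V j0) = (\<lambda>i. A D i - (\<Sum>j\<in>J. A (?V j) i))"
    by (simp add: fun_eq_iff)
  then have "vec_norm2 m (A (?V j0)) \<le> vec_norm2 m (A D) + vec_norm2 m (\<lambda>i. \<Sum>j\<in>J. A (?V j) i)"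
    by (simp only: vec_norm2_diff_le)
  then show ?thesis
    using vec_norm2_sum_le[OF partition(2), of m "\<lambda>j. A (?V j)"] by simp
qed

lemma partition_insert_into_first_block:
  fixes B :: "nat \<Rightarrow> 'a set"
  assumes "R = (\<Union>j\<le>M. B j)" "disjoint_family B" "a \<notin> R"
  shows "insert a R = (\<Union>j\<in>insert 0 {1..M}. (B(0 := insert a (B 0))) j)"
    and "disjoint_family_on (B(0 := insert a (B 0))) (insert 0 {1..M})"
proof -
  have "insert 0 {1..M} = {..M}" by auto
  have "(\<Union>j\<in>insert 0 {1..M}. (B(0 := insert a (B 0))) j) = insert a (\<Union>j\<in>insert 0 {1..M}. B j)"
    by auto
  also have "\<dots> = insert a R"
    unfolding \<open>insert 0 {1..M} = {..M}\<close> assms(1) ..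
  finally show "insert a R = (\<Union>j\<in>insert 0 {1..M}. (B(0 := insert a (B 0))) j)" ..
  show "disjoint_family_on (B(0 := insert a (B 0))) (insert 0 {1..M})"
    unfolding disjoint_family_on_def
  proof (intro ballI impI)
    fix j k assume "j \<in> insert 0 {1..M}" "k \<in> insert 0 {1..M}" "j \<noteq> k"
    then have "a \<notin> B j" "a \<notin> B k" "B j \<inter> B k = {}"
      using assms disjoint_family_onD[OF assms(2) UNIV_I UNIV_I \<open>j \<noteq> k\<close>] by auto
    then show "(B(0 := insert a (B 0))) j \<inter> (B(0 := insert a (B 0))) k = {}"
      using \<open>j \<noteq> k\<close> by auto
  qed
qed

lemma haar_rip_error_estimate:
  assumes lin: "linear_meas (2^n) m A" and \<delta>: "\<delta> < 1/3" and rip: "rip_haar n m A \<tau> \<delta>"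
    and t: "real (t + 1) \<le> \<tau>" "t \<ge> 1" and D: "is_array (2^n) D"
  shows "arr_norm2 (2^n) D \<le>
    5/4 * vec_norm2 m (A D) + 5/2 * ((\<Sum>b\<in>haar_index n - {None}. cmod (haar_coef n D b)) / sqrt t)"
proof -
  let ?f = "\<lambda>b. cmod (haar_coef n D b)"
  let ?V = "\<lambda>T. vec_norm2 m (A (haar_synth n (haar_coef n D) T))"
  obtain B and M :: nat where B: "haar_index n - {None} = (\<Union>j\<le>M. B j)" "disjoint_family B"
      "\<forall>j. card (B j) \<le> t"
    and tail: "(\<Sum>j\<in>{1..M}. L2_set ?f (B j)) \<le> (\<Sum>b\<in>haar_index n - {None}. ?f b) / sqrt t"
    by (rule shelling_partition[of "haar_index n - {None}" t ?f,
          OF finite_Diff[OF finite_haar_index] t(2) norm_ge_zero])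
  \<comment> \<open>The first block gets the constant coefficient and the \<open>t\<close> largest ones; the restricted
    isometry is used from below on it and from above on all later blocks.\<close>
  define T where "T = B(0 := insert None (B 0))"
  have "None \<in> haar_index n" unfolding haar_index_def by simp
  have "None \<notin> haar_index n - {None}" by simp
  note blocks = partition_insert_into_first_block[OF B(1,2) this, folded T_def]
  have partition: "haar_index n = (\<Union>j\<in>insert 0 {1..M}. T j)"
    using blocks(1) unfolding insert_Diff[OF \<open>None \<in> haar_index n\<close>] .
  note disjoint = blocks(2)
  have T_rip: "T j \<subseteq> haar_index n" "real (card (T j)) \<le> \<tau>" if "j \<le> M" for j
  proof -
    have "j \<in> insert 0 {1..M}" using that by auto
    then show "T j \<subseteq> haar_index n" unfolding partition by blast
    then have "finite (B j)" unfolding T_def by (cases "j = 0") (auto intro: finite_subset)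
    then have "card (T j) \<le> t + 1"
      using spec[OF B(3), of j] unfolding T_def by (auto simp: card_insert_if)
    then show "real (card (T j)) \<le> \<tau>" using t(1) by linarith
  qed
  note rip_T = rip_haar_haar_synth_norm[OF rip \<delta> T_rip]
  have "?V (T 0) \<le> vec_norm2 m (A D) + (\<Sum>j\<in>{1..M}. ?V (T j))"
    using vec_norm2_meas_haar_block_le[OF lin D partition _ _ disjoint] by simp
  then have "4/5 * L2_set ?f (T 0) \<le> vec_norm2 m (A D) + (\<Sum>j\<in>{1..M}. ?V (T j))"
    using rip_T(1)[OF le0 le0, of "haar_coef n D"] by linarith
  also have "\<dots> \<le> vec_norm2 m (A D) + 6/5 * (\<Sum>j\<in>{1..M}. L2_set ?f (T j))"
    unfolding sum_distrib_left by (intro add_left_mono sum_mono rip_T(2)) auto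
  finally have "L2_set ?f (T 0) \<le> 5/4 * vec_norm2 m (A D) + 3/2 * (\<Sum>j\<in>{1..M}. L2_set ?f (B j))"
    unfolding T_def by simp
  moreover have "arr_norm2 (2^n) D \<le> L2_set ?f (T 0) + (\<Sum>j\<in>{1..M}. L2_set ?f (B j))"
    using arr_norm2_le_sum_L2_set_haar_coef[OF partition _ disjoint] unfolding T_def by simp
  ultimately show ?thesis
    using tail vec_norm2_nonneg[of m "A D"] by linarith
qed

lemma sparsity_le_ln_cube:
  assumes "n \<ge> 1" "s \<ge> 1"
  shows "real (16384 * s * n\<^sup>2 + 1) \<le> 131072 * real s * (ln (2^n))^3"
proof -
  have "2/3 * real n \<le> ln 2 * real n"
    using ln2_ge_two_thirds by (intro mult_right_mono) auto
  then have "(2/3 * real n)^3 \<le> (ln ((2::real)^n))^3"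
    by (intro power_mono) (auto simp: ln_realpow mult.commute)
  moreover have "(2/3 * real n)^3 = 8/27 * (real n)^3"
    by (simp add: power3_eq_cube field_simps)
  ultimately have cube: "8/27 * (real n)^3 \<le> (ln ((2::real)^n))^3"
    by linarith
  have "1 * 1 \<le> real s * (real n)\<^sup>2"
    using assms by (intro mult_mono) (simp_all add: one_le_power)
  then have "real (16384 * s * n\<^sup>2 + 1) \<le> 131072 * 8/27 * (real s * (real n)\<^sup>2)"
    by simp
  also have "\<dots> \<le> 131072 * 8/27 * (real s * (real n)^3)"
    using assms by (intro mult_left_mono) (simp_all add: power_increasing)
  also have "\<dots> \<le> 131072 * real s * (ln (2^n))^3"
    using mult_left_mono[OF cube, of "131072 * real s"] by simp
  finally show ?thesis .
qed

lemma tv_minimizer_error_bound: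
  assumes n: "n \<ge> 1" and s: "s \<ge> 1" and lin: "linear_meas (2^n) m A" and \<delta>: "\<delta> < 1/3"
    and rip: "rip_haar n m A \<tau> \<delta>" and \<tau>: "real (16384 * s * n\<^sup>2 + 1) \<le> \<tau>"
    and X: "is_array (2^n) X" and Xh: "is_array (2^n) Xh" and tv: "tv_norm (2^n) Xh \<le> tv_norm (2^n) X"
  shows "arr_norm2 (2^n) (\<lambda>p. X p - Xh p) \<le>
    2 * vec_norm2 m (A (\<lambda>p. X p - Xh p)) + grad_tail (2^n) s X / sqrt s"
proof -
  let ?D = "\<lambda>p. X p - Xh p"
  let ?e = "arr_norm2 (2^n) ?D" and ?a = "vec_norm2 m (A ?D)" and ?\<sigma> = "grad_tail (2^n) s X"
  let ?\<Lambda> = "\<Sum>b\<in>haar_index n - {None}. cmod (haar_coef n ?D b)"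
  \<comment> \<open>\<open>sqrt t = 128 n sqrt s\<close> absorbs the factor \<open>3 n\<close> of the l1 bound: \<open>|D|_2\<close> comes back
    with coefficient \<open>45/128 < 1\<close>.\<close>
  define t where "t = 16384 * s * n\<^sup>2"
  have t: "t \<ge> 1" "sqrt t = 128 * real n * sqrt s"
    using n s unfolding t_def by (simp_all add: real_sqrt_mult)
  have "?\<Lambda> \<le> 3 * real n * (6 * sqrt s * ?e + 2 * ?\<sigma>)"
    by (rule order.trans[OF haar_coef_l1_le_tv_norm])
      (intro mult_left_mono tv_norm_diff_le[OF X Xh tv]; simp)
  then have "?\<Lambda> / sqrt t \<le> 18/128 * ?e + 6/128 * (?\<sigma> / sqrt s)"
    using n s unfolding t(2) by (simp add: field_simps)
  moreover have "?e \<le> 5/4 * ?a + 5/2 * (?\<Lambda> / sqrt t)"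
    using haar_rip_error_estimate[OF lin \<delta> rip _ t(1) is_array_diff[OF X Xh]] \<tau> unfolding t_def by simp
  moreover have "?\<sigma> / sqrt s \<ge> 0" using grad_tail_nonneg by simp
  ultimately show ?thesis using vec_norm2_nonneg[of m "A ?D"] by linarith
qed

theorem theorem5:
  "\<exists>C>0. \<exists>C'>0. \<forall>(n::nat) (s::nat) (m::nat) (A :: arr \<Rightarrow> (nat \<Rightarrow> complex)) (\<delta>::real)
      (X::arr) (\<xi>::nat \<Rightarrow> complex) (\<epsilon>::real) (Xh::arr).
     n \<ge> 1 \<longrightarrow> s \<ge> 1 \<longrightarrow>
     linear_meas (2^n) m A \<longrightarrow>
     \<delta> < 1/3 \<longrightarrow>
     rip_haar n m A (C * real s * (ln (2^n))^3) \<delta> \<longrightarrow>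
     is_array (2^n) X \<longrightarrow>
     (\<forall>i. i \<ge> m \<longrightarrow> \<xi> i = 0) \<longrightarrow>
     vec_norm2 m \<xi> \<le> \<epsilon> \<longrightarrow>
     (let y = (\<lambda>i. A X i + \<xi> i) in
       is_array (2^n) Xh \<and> vec_norm2 m (\<lambda>i. A Xh i - y i) \<le> \<epsilon> \<and>
       (\<forall>Z. is_array (2^n) Z \<longrightarrow> vec_norm2 m (\<lambda>i. A Z i - y i) \<le> \<epsilon> \<longrightarrow>
            tv_norm (2^n) Xh \<le> tv_norm (2^n) Z)
       \<longrightarrow> arr_norm2 (2^n) (\<lambda>p. X p - Xh p)
             \<le> C' * (grad_tail (2^n) s X / sqrt (real s) + \<epsilon>))"
proof (rule exI[of _ 131072], rule conjI, simp, rule exI[of _ 4], rule conjI, simp,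
    intro allI impI, unfold Let_def, intro impI, elim conjE)
  fix n s m :: nat and A :: "arr \<Rightarrow> nat \<Rightarrow> complex" and \<delta> \<epsilon> :: real and X Xh :: arr
    and \<xi> :: "nat \<Rightarrow> complex"
  assume n: "n \<ge> 1" and s: "s \<ge> 1" and lin: "linear_meas (2^n) m A" and \<delta>: "\<delta> < 1/3"
    and rip: "rip_haar n m A (131072 * real s * (ln (2^n))^3) \<delta>" and X: "is_array (2^n) X"
    and "\<forall>i. m \<le> i \<longrightarrow> \<xi> i = 0" and \<xi>: "vec_norm2 m \<xi> \<le> \<epsilon>" and Xh: "is_array (2^n) Xh"
    and Xh_feasible: "vec_norm2 m (\<lambda>i. A Xh i - (A X i + \<xi> i)) \<le> \<epsilon>"
    and Xh_minimal: "\<forall>Z. is_array (2^n) Z \<longrightarrow> vec_norm2 m (\<lambda>i. A Z i - (A X i + \<xi> i)) \<le> \<epsilon> \<longrightarrow>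
      tv_norm (2^n) Xh \<le> tv_norm (2^n) Z"
  have X_feasible: "vec_norm2 m (\<lambda>i. A X i - (A X i + \<xi> i)) \<le> \<epsilon>"
    using \<xi> vec_norm2_uminus[of m \<xi>] by simp
  have "arr_norm2 (2^n) (\<lambda>p. X p - Xh p) \<le>
      2 * vec_norm2 m (A (\<lambda>p. X p - Xh p)) + grad_tail (2^n) s X / sqrt s"
    using Xh_minimal[rule_format, OF X X_feasible]
    by (rule tv_minimizer_error_bound[OF n s lin \<delta> rip sparsity_le_ln_cube[OF n s] X Xh])
  moreover have "vec_norm2 m (A (\<lambda>p. X p - Xh p)) \<le> 2 * \<epsilon>"
    by (rule vec_norm2_meas_diff_le[OF lin X Xh X_feasible Xh_feasible])
  moreover have "grad_tail (2^n) s X / sqrt s \<ge> 0"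
    using grad_tail_nonneg by simp
  ultimately show "arr_norm2 (2^n) (\<lambda>p. X p - Xh p) \<le> 4 * (grad_tail (2^n) s X / sqrt s + \<epsilon>)"
    unfolding distrib_left by linarith
qed

end
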